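(* Assume $(\hat f^{(i)})_{i\in[M+1]}$, $\hat f^{(i)}\in\mathbb{R}^{m_i}$, is an optimal solution of the Lagrange dual problem $\max L$. Put $\hat u^{(i)}=\exp(\hat f^{(i)}/\epsilon)$ (componentwise) for $i\in[M+1]$. Then the matrices \[ \hat P^{(i)}=\mathrm{diag}(\hat u^{(i)})K^{(i)}\mathrm{diag}(\mathbf 1_{m_{i+1}}/\hat u^{(i+1)})\ (i\in[M-1]),\qquad \hat P^{(M)}=\mathrm{diag}(\hat u^{(M)})K^{(M)}\mathrm{diag}(\hat u^{(M+1)}) \] form an optimal solution (in particular a feasible one) of the regularized sequentially composed optimal transport problem.
   Context: Fix $M\ge2$, positive integers $m_1,\dots,m_{M+1}$, cost matrices $C^{(i)}\in\mathbb{R}_{\ge0}^{m_i\times m_{i+1}}$, probability vectors $a\in\mathbb{R}^{m_1}$, $b\in\mathbb{R}^{m_{M+1}}$, $\epsilon>0$, Gibbs kernels $K^{(i)}_{jk}=\exp(-C^{(i)}_{jk}/\epsilon)$. The regularized sequentially composed OT problem: minimize $\sum_{i=1}^M(\langle C^{(i)},P^{(i)}\rangle-\epsilon H(P^{(i)}))$ over $P^{(i)}\in\mathbb{R}_{\ge0}^{m_i\times m_{i+1}}$ subject to $P^{(1)}\mathbf 1=a$, $(P^{(M)})^\top\mathbf 1=b$, $(P^{(i)})^\top\mathbf 1=P^{(i+1)}\mathbf 1$ for $i\in[M-1]$, with $H(P)=-\sum P_{jk}(\log P_{jk}-1)$. Its Lagrange dual is to maximize over $f^{(i)}\in\mathbb{R}^{m_i}$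 \[ L((f^{(i)})_i)=\langle f^{(1)},a\rangle+\langle f^{(M+1)},b\rangle-\epsilon\Big(\sum_{j,k}\exp\big((f^{(M)}_j+f^{(M+1)}_k-C^{(M)}_{jk})/\epsilon\big)+\sum_{i=1}^{M-1}\sum_{j,k}\exp\big((f^{(i)}_j-f^{(i+1)}_k-C^{(i)}_{jk})/\epsilon\big)\Big). \] *)

theory Defs
  imports Complex_Main
begin

text \<open>Layers are indexed i = 1..M+1; the dimension of layer i is m i;
  vector components are indexed 0..<m i. A family of vectors is a function
  f :: nat => nat => real with f i j the j-th entry of f^(i). A family of matrices
  is P :: nat => nat => nat => real with P i j k the (j,k) entry of P^(i),
  j < m i, k < m (Suc i). Costs C likewise. Values outside these ranges are irrelevant.\<close>

definition gibbs :: "real \<Rightarrow> (nat \<Rightarrow> nat \<Rightarrow> nat \<Rightarrow> real) \<Rightarrow> nat \<Rightarrow> nat \<Rightarrow> nat \<Rightarrow> real" where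
  "gibbs eps C i j k = exp (- C i j k / eps)"

text \<open>Entropy H(P) = - sum P_jk (log P_jk - 1); note ln 0 = 0 in Isabelle, so the
  summand is 0 at P_jk = 0 (standard convention 0 log 0 = 0).\<close>
definition entropy :: "nat \<Rightarrow> nat \<Rightarrow> (nat \<Rightarrow> nat \<Rightarrow> real) \<Rightarrow> real" where
  "entropy r c Q = - (\<Sum>j<r. \<Sum>k<c. Q j k * (ln (Q j k) - 1))"

definition seq_ot_objective ::
  "nat \<Rightarrow> (nat \<Rightarrow> nat) \<Rightarrow> (nat \<Rightarrow> nat \<Rightarrow> nat \<Rightarrow> real) \<Rightarrow> real
    \<Rightarrow> (nat \<Rightarrow> nat \<Rightarrow> nat \<Rightarrow> real) \<Rightarrow> real" where
  "seq_ot_objective M m C eps P =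
     (\<Sum>i=1..M. (\<Sum>j<m i. \<Sum>k<m (Suc i). C i j k * P i j k)
                 - eps * entropy (m i) (m (Suc i)) (P i))"

definition seq_ot_feasible ::
  "nat \<Rightarrow> (nat \<Rightarrow> nat) \<Rightarrow> (nat \<Rightarrow> real) \<Rightarrow> (nat \<Rightarrow> real)
    \<Rightarrow> (nat \<Rightarrow> nat \<Rightarrow> nat \<Rightarrow> real) \<Rightarrow> bool" where
  "seq_ot_feasible M m a b P \<longleftrightarrow>
     (\<forall>i\<in>{1..M}. \<forall>j<m i. \<forall>k<m (Suc i). P i j k \<ge> 0)
   \<and> (\<forall>j<m 1. (\<Sum>k<m 2. P 1 j k) = a j)
   \<and> (\<forall>k<m (Suc M). (\<Sum>j<m M. P M j k) = b k)
   \<and> (\<forall>i\<in>{1..M-1}. \<forall>k<m (Suc i).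
        (\<Sum>j<m i. P i j k) = (\<Sum>l<m (Suc (Suc i)). P (Suc i) k l))"

definition seq_ot_optimal ::
  "nat \<Rightarrow> (nat \<Rightarrow> nat) \<Rightarrow> (nat \<Rightarrow> nat \<Rightarrow> nat \<Rightarrow> real) \<Rightarrow> real
    \<Rightarrow> (nat \<Rightarrow> real) \<Rightarrow> (nat \<Rightarrow> real) \<Rightarrow> (nat \<Rightarrow> nat \<Rightarrow> nat \<Rightarrow> real) \<Rightarrow> bool" where
  "seq_ot_optimal M m C eps a b P \<longleftrightarrow>
     seq_ot_feasible M m a b P \<and>
     (\<forall>Q. seq_ot_feasible M m a b Q \<longrightarrow> seq_ot_objective M m C eps P \<le> seq_ot_objective M m C eps Q)"

definition seq_ot_dual ::
  "nat \<Rightarrow> (nat \<Rightarrow> nat) \<Rightarrow> (nat \<Rightarrow> nat \<Rightarrow> nat \<Rightarrow> real) \<Rightarrow> real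
    \<Rightarrow> (nat \<Rightarrow> real) \<Rightarrow> (nat \<Rightarrow> real) \<Rightarrow> (nat \<Rightarrow> nat \<Rightarrow> real) \<Rightarrow> real" where
  "seq_ot_dual M m C eps a b f =
     (\<Sum>j<m 1. f 1 j * a j) + (\<Sum>k<m (Suc M). f (Suc M) k * b k)
     - eps * ((\<Sum>j<m M. \<Sum>k<m (Suc M). exp ((f M j + f (Suc M) k - C M j k) / eps))
              + (\<Sum>i=1..M-1. \<Sum>j<m i. \<Sum>k<m (Suc i).
                   exp ((f i j - f (Suc i) k - C i j k) / eps)))"

definition seq_ot_dual_optimal ::
  "nat \<Rightarrow> (nat \<Rightarrow> nat) \<Rightarrow> (nat \<Rightarrow> nat \<Rightarrow> nat \<Rightarrow> real) \<Rightarrow> real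
    \<Rightarrow> (nat \<Rightarrow> real) \<Rightarrow> (nat \<Rightarrow> real) \<Rightarrow> (nat \<Rightarrow> nat \<Rightarrow> real) \<Rightarrow> bool" where
  "seq_ot_dual_optimal M m C eps a b f \<longleftrightarrow>
     (\<forall>g. seq_ot_dual M m C eps a b g \<le> seq_ot_dual M m C eps a b f)"

definition dual_to_primal ::
  "nat \<Rightarrow> (nat \<Rightarrow> nat \<Rightarrow> nat \<Rightarrow> real) \<Rightarrow> real \<Rightarrow> (nat \<Rightarrow> nat \<Rightarrow> real)
    \<Rightarrow> nat \<Rightarrow> nat \<Rightarrow> nat \<Rightarrow> real" where
  "dual_to_primal M C eps f i j k =
     (let u = (\<lambda>i j. exp (f i j / eps)) in
      if i = M then u i j * gibbs eps C i j k * u (Suc i) k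
      else u i j * gibbs eps C i j k * (1 / u (Suc i) k))"

end

theory Submission
  imports Defs
begin

text \<open>Lagrangian duality. Let the residual r(Q) collect the violations of the marginal and
  chaining constraints and put L(Q, f) = objective(Q) - <f, r(Q)>. Termwise Fenchel--Young for
  the pair q (ln q - 1) and exp gives L(Q, f) \<ge> dual(f) for every nonnegative Q, with equality
  for the matrices P_f built from f. The dual is smooth, and its derivative at f in direction h
  is -<h, r(P_f)>; at a maximiser this vanishes, and the direction h = r(P_f) yields
  |r(P_f)|^2 = 0, so P_f is feasible. Then for every feasible Q,
  objective(P_f) = L(P_f, f) = dual(f) \<le> L(Q, f) = objective(Q).\<close>

text \<open>The exponent of P_f: f^(i)_j - f^(i+1)_k, except on the last layer, where u^(M+1)
  enters undivided.\<close>
definition edge_potential :: "nat \<Rightarrow> (nat \<Rightarrow> nat \<Rightarrow> real) \<Rightarrow> nat \<Rightarrow> nat \<Rightarrow> nat \<Rightarrow> real" where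
  "edge_potential M f i j k = (if i = M then f M j + f (Suc M) k else f i j - f (Suc i) k)"

lemma dual_to_primal_eq_exp:
  "dual_to_primal M C eps f i j k = exp ((edge_potential M f i j k - C i j k) / eps)"
  unfolding dual_to_primal_def gibbs_def edge_potential_def Let_def
  by (simp add: add_divide_distrib diff_divide_distrib exp_add exp_diff exp_minus field_simps)

lemma seq_ot_dual_eq:
  assumes "M \<ge> 1"
  shows "seq_ot_dual M m C eps a b f =
     (\<Sum>j<m 1. f 1 j * a j) + (\<Sum>k<m (Suc M). f (Suc M) k * b k)
     - eps * (\<Sum>i=1..M. \<Sum>j<m i. \<Sum>k<m (Suc i). exp ((edge_potential M f i j k - C i j k) / eps))"
proof -
  obtain n where M: "M = Suc n" using assms by (cases M) auto
  have "(\<Sum>i=1..n. \<Sum>j<m i. \<Sum>k<m (Suc i). exp ((edge_potential M f i j k - C i j k) / eps))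
     = (\<Sum>i=1..M-1. \<Sum>j<m i. \<Sum>k<m (Suc i). exp ((f i j - f (Suc i) k - C i j k) / eps))"
    using M by (intro sum.cong) (auto simp: edge_potential_def)
  then show ?thesis
    using M by (simp add: seq_ot_dual_def edge_potential_def algebra_simps)
qed

text \<open>Node (1, j) carries the row-sum constraint against a, node (M+1, k) the column-sum
  constraint against b, and nodes 2..M the chaining constraints; the sign at node M+1 matches
  that of f^(M+1) in the dual.\<close>
definition marginal_residual ::
  "nat \<Rightarrow> (nat \<Rightarrow> nat) \<Rightarrow> (nat \<Rightarrow> real) \<Rightarrow> (nat \<Rightarrow> real) \<Rightarrow> (nat \<Rightarrow> nat \<Rightarrow> nat \<Rightarrow> real)
    \<Rightarrow> nat \<Rightarrow> nat \<Rightarrow> real" where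
  "marginal_residual M m a b Q i j =
     (if i = 1 then (\<Sum>k<m 2. Q 1 j k) - a j
      else if i \<le> M then (\<Sum>k<m (Suc i). Q i j k) - (\<Sum>l<m (i - 1). Q (i - 1) l j)
      else (\<Sum>l<m M. Q M l j) - b j)"

lemma sum_bilinear_split:
  fixes Q :: "nat \<Rightarrow> nat \<Rightarrow> real"
  shows "(\<Sum>j<r. \<Sum>k<c. Q j k * (x j + s * y k)) =
     (\<Sum>j<r. x j * (\<Sum>k<c. Q j k)) + s * (\<Sum>k<c. y k * (\<Sum>j<r. Q j k))"
proof -
  have "(\<Sum>j<r. \<Sum>k<c. Q j k * (x j + s * y k)) =
      (\<Sum>j<r. \<Sum>k<c. x j * Q j k) + s * (\<Sum>j<r. \<Sum>k<c. y k * Q j k)"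
    by (simp add: distrib_left sum.distrib sum_distrib_left mult_ac)
  also have "(\<Sum>j<r. \<Sum>k<c. y k * Q j k) = (\<Sum>k<c. \<Sum>j<r. y k * Q j k)"
    by (rule sum.swap)
  finally show ?thesis by (simp add: sum_distrib_left)
qed

lemma sum_layers_eq_sum_nodes:
  fixes X Y :: "nat \<Rightarrow> 'a::ab_group_add"
  shows "(\<Sum>i=1..n. X i - Y i) + (X (Suc n) + Y (Suc n))
     = X 1 + (\<Sum>i=2..Suc n. X i - Y (i - 1)) + Y (Suc n)"
proof -
  have "(\<Sum>i=1..n. X i) + X (Suc n) = X 1 + (\<Sum>i=2..Suc n. X i)"
    by (simp add: sum.atLeast_Suc_atMost numeral_2_eq_2)
  moreover have "(\<Sum>i=2..Suc n. Y (i - 1)) = (\<Sum>i=1..n. Y i)"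
    using sum.shift_bounds_cl_Suc_ivl[of "\<lambda>i. Y (i - 1)" 1 n] by (simp add: numeral_2_eq_2)
  ultimately show ?thesis
    by (simp add: sum_subtractf algebra_simps)
qed

lemma sum_edge_potential_eq_residual:
  assumes "M \<ge> 1"
  shows "(\<Sum>i=1..M. \<Sum>j<m i. \<Sum>k<m (Suc i). Q i j k * edge_potential M h i j k)
     = (\<Sum>j<m 1. h 1 j * a j) + (\<Sum>k<m (Suc M). h (Suc M) k * b k)
       + (\<Sum>i=1..Suc M. \<Sum>j<m i. h i j * marginal_residual M m a b Q i j)"
proof -
  obtain n where M: "M = Suc n" using assms by (cases M) auto
  define X where "X i = (\<Sum>j<m i. h i j * (\<Sum>k<m (Suc i). Q i j k))" for i
  define Y where "Y i = (\<Sum>k<m (Suc i). h (Suc i) k * (\<Sum>j<m i. Q i j k))" for i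
  define A where "A = (\<Sum>j<m 1. h 1 j * a j)"
  define B where "B = (\<Sum>k<m (Suc M). h (Suc M) k * b k)"
  define N where "N i = (\<Sum>j<m i. h i j * marginal_residual M m a b Q i j)" for i
  have layer: "(\<Sum>j<m i. \<Sum>k<m (Suc i). Q i j k * edge_potential M h i j k)
      = (if i = M then X i + Y i else X i - Y i)" for i
    using sum_bilinear_split[where Q="Q i" and x="h i" and s=1 and y="h (Suc i)"]
      sum_bilinear_split[where Q="Q i" and x="h i" and s="-1" and y="h (Suc i)"]
    by (cases "i = M") (simp_all add: edge_potential_def X_def Y_def)
  have node: "N i = (if i = 1 then X 1 - A else if i \<le> M then X i - Y (i - 1) else Y M - B)"
    if "i \<in> {1..Suc M}" for i
    using that by (auto simp: le_Suc_eq N_def marginal_residual_def X_def Y_def A_def B_def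
        right_diff_distrib sum_subtractf numeral_2_eq_2)
  have "(\<Sum>i=1..M. \<Sum>j<m i. \<Sum>k<m (Suc i). Q i j k * edge_potential M h i j k)
      = (\<Sum>i=1..n. \<Sum>j<m i. \<Sum>k<m (Suc i). Q i j k * edge_potential M h i j k)
        + (\<Sum>j<m M. \<Sum>k<m (Suc M). Q M j k * edge_potential M h M j k)"
    using M by simp
  also have "\<dots> = (\<Sum>i=1..n. X i - Y i) + (X M + Y M)"
  proof -
    have "(\<Sum>j<m i. \<Sum>k<m (Suc i). Q i j k * edge_potential M h i j k) = X i - Y i"
      if "i \<in> {1..n}" for i
      using that M layer[of i] by simp
    then show ?thesis using layer[of M] by simp
  qed
  also have "\<dots> = X 1 + (\<Sum>i=2..M. X i - Y (i - 1)) + Y M"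
    unfolding M by (rule sum_layers_eq_sum_nodes)
  also have "\<dots> = A + B + (N 1 + (\<Sum>i=2..M. N i) + N (Suc M))"
    using M node by simp
  also have "N 1 + (\<Sum>i=2..M. N i) + N (Suc M) = (\<Sum>i=1..Suc M. N i)"
    using M by (simp add: sum.atLeast_Suc_atMost numeral_2_eq_2)
  finally show ?thesis unfolding A_def B_def N_def .
qed

lemma seq_ot_feasible_iff_residual:
  assumes "M \<ge> 1"
  shows "seq_ot_feasible M m a b Q \<longleftrightarrow>
     (\<forall>i\<in>{1..M}. \<forall>j<m i. \<forall>k<m (Suc i). Q i j k \<ge> 0)
     \<and> (\<forall>i\<in>{1..Suc M}. \<forall>j<m i. marginal_residual M m a b Q i j = 0)"
proof -
  have "(\<forall>i\<in>{1..Suc M}. \<forall>j<m i. marginal_residual M m a b Q i j = 0) \<longleftrightarrow>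
      (\<forall>j<m 1. marginal_residual M m a b Q 1 j = 0)
      \<and> (\<forall>i\<in>{1..M-1}. \<forall>k<m (Suc i). marginal_residual M m a b Q (Suc i) k = 0)
      \<and> (\<forall>k<m (Suc M). marginal_residual M m a b Q (Suc M) k = 0)"
    (is "?all \<longleftrightarrow> ?split")
  proof
    assume ?split
    show ?all
    proof (intro ballI allI impI)
      fix i j assume i: "i \<in> {1..Suc M}" and j: "j < m i"
      consider "i = 1" | "i = Suc M" | "i - 1 \<in> {1..M-1}" "i = Suc (i - 1)"
        using i by fastforce
      then show "marginal_residual M m a b Q i j = 0"
        using \<open>?split\<close> j by cases metis+
    qed
  qed (use assms in auto)
  then show ?thesis
    using assms by (auto simp: seq_ot_feasible_def marginal_residual_def)
qed

lemma exp_fenchel_young: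
  fixes q s eps :: real
  assumes "q \<ge> 0" "eps > 0"
  shows "s * q - eps * (q * (ln q - 1)) \<le> eps * exp (s / eps)"
proof (cases "q = 0")
  case True
  then show ?thesis using assms by simp
next
  case False
  with assms have "q > 0" by simp
  have "q * (1 + (s / eps - ln q)) \<le> q * exp (s / eps - ln q)"
    using \<open>q > 0\<close> by (intro mult_left_mono exp_ge_add_one_self) simp_all
  also have "\<dots> = exp (s / eps)"
    using \<open>q > 0\<close> by (simp add: exp_diff)
  finally have "eps * (q * (1 + (s / eps - ln q))) \<le> eps * exp (s / eps)"
    using assms by simp
  moreover have "eps * (q * (1 + (s / eps - ln q))) = s * q - eps * (q * (ln q - 1))"
    using assms by (simp add: field_simps)
  ultimately show ?thesis by simp
qed

lemma seq_ot_objective_eq: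
  "seq_ot_objective M m C eps Q = (\<Sum>i=1..M. \<Sum>j<m i. \<Sum>k<m (Suc i).
      C i j k * Q i j k + eps * (Q i j k * (ln (Q i j k) - 1)))"
  unfolding seq_ot_objective_def entropy_def
  by (intro sum.cong refl) (simp add: sum.distrib sum_distrib_left)

definition seq_ot_lagrangian ::
  "nat \<Rightarrow> (nat \<Rightarrow> nat) \<Rightarrow> (nat \<Rightarrow> nat \<Rightarrow> nat \<Rightarrow> real) \<Rightarrow> real \<Rightarrow> (nat \<Rightarrow> real) \<Rightarrow> (nat \<Rightarrow> real)
    \<Rightarrow> (nat \<Rightarrow> nat \<Rightarrow> nat \<Rightarrow> real) \<Rightarrow> (nat \<Rightarrow> nat \<Rightarrow> real) \<Rightarrow> real" where
  "seq_ot_lagrangian M m C eps a b Q f =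
     seq_ot_objective M m C eps Q
     - (\<Sum>i=1..Suc M. \<Sum>j<m i. f i j * marginal_residual M m a b Q i j)"

lemma seq_ot_lagrangian_eq:
  assumes "M \<ge> 1"
  shows "seq_ot_lagrangian M m C eps a b Q f =
     (\<Sum>j<m 1. f 1 j * a j) + (\<Sum>k<m (Suc M). f (Suc M) k * b k)
     - (\<Sum>i=1..M. \<Sum>j<m i. \<Sum>k<m (Suc i).
          (edge_potential M f i j k - C i j k) * Q i j k - eps * (Q i j k * (ln (Q i j k) - 1)))"
proof -
  have "(\<Sum>i=1..M. \<Sum>j<m i. \<Sum>k<m (Suc i).
          (edge_potential M f i j k - C i j k) * Q i j k - eps * (Q i j k * (ln (Q i j k) - 1)))
      = (\<Sum>i=1..M. \<Sum>j<m i. \<Sum>k<m (Suc i). Q i j k * edge_potential M f i j k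
          - (C i j k * Q i j k + eps * (Q i j k * (ln (Q i j k) - 1))))"
    by (simp add: algebra_simps)
  also have "\<dots> = (\<Sum>i=1..M. \<Sum>j<m i. \<Sum>k<m (Suc i). Q i j k * edge_potential M f i j k)
      - seq_ot_objective M m C eps Q"
    by (simp add: seq_ot_objective_eq sum_subtractf)
  finally show ?thesis
    using sum_edge_potential_eq_residual[OF assms, where m=m and Q=Q and h=f and a=a and b=b]
    by (simp add: seq_ot_lagrangian_def)
qed

lemma seq_ot_dual_le_lagrangian:
  assumes "M \<ge> 1" "eps > 0"
    and Q_nonneg: "\<forall>i\<in>{1..M}. \<forall>j<m i. \<forall>k<m (Suc i). Q i j k \<ge> 0"
  shows "seq_ot_dual M m C eps a b f \<le> seq_ot_lagrangian M m C eps a b Q f"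
proof -
  have "(\<Sum>i=1..M. \<Sum>j<m i. \<Sum>k<m (Suc i).
          (edge_potential M f i j k - C i j k) * Q i j k - eps * (Q i j k * (ln (Q i j k) - 1)))
      \<le> (\<Sum>i=1..M. \<Sum>j<m i. \<Sum>k<m (Suc i). eps * exp ((edge_potential M f i j k - C i j k) / eps))"
    using Q_nonneg \<open>eps > 0\<close> by (intro sum_mono exp_fenchel_young) auto
  then show ?thesis
    unfolding seq_ot_dual_eq[OF \<open>M \<ge> 1\<close>] seq_ot_lagrangian_eq[OF \<open>M \<ge> 1\<close>]
    by (simp add: sum_distrib_left)
qed

lemma seq_ot_weak_duality:
  assumes "M \<ge> 1" "eps > 0" "seq_ot_feasible M m a b Q"
  shows "seq_ot_dual M m C eps a b f \<le> seq_ot_objective M m C eps Q"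
proof -
  have "seq_ot_dual M m C eps a b f \<le> seq_ot_lagrangian M m C eps a b Q f"
    using assms(3) seq_ot_feasible_iff_residual[OF assms(1)]
    by (intro seq_ot_dual_le_lagrangian[OF assms(1,2)]) blast
  also have "\<dots> = seq_ot_objective M m C eps Q"
    using assms(3) by (simp add: seq_ot_lagrangian_def seq_ot_feasible_iff_residual[OF assms(1)])
  finally show ?thesis .
qed

lemma seq_ot_lagrangian_dual_to_primal:
  assumes "M \<ge> 1" "eps > 0"
  shows "seq_ot_lagrangian M m C eps a b (dual_to_primal M C eps f) f = seq_ot_dual M m C eps a b f"
proof -
  define P where "P = dual_to_primal M C eps f"
  \<comment> \<open>equality case of Fenchel--Young, since ln (P i j k) is the exponent\<close>
  have "(\<Sum>i=1..M. \<Sum>j<m i. \<Sum>k<m (Suc i). (edge_potential M f i j k - C i j k) * P i j k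
          - eps * (P i j k * (ln (P i j k) - 1)))
      = (\<Sum>i=1..M. \<Sum>j<m i. \<Sum>k<m (Suc i). eps * exp ((edge_potential M f i j k - C i j k) / eps))"
    unfolding P_def dual_to_primal_eq_exp using \<open>eps > 0\<close>
    by (intro sum.cong refl) (simp add: field_simps)
  then show ?thesis
    unfolding seq_ot_dual_eq[OF \<open>M \<ge> 1\<close>] seq_ot_lagrangian_eq[OF \<open>M \<ge> 1\<close>] P_def
    by (simp add: sum_distrib_left)
qed

lemma edge_potential_add_scaled:
  "edge_potential M (\<lambda>i j. f i j + t * h i j) i j k = edge_potential M f i j k + t * edge_potential M h i j k"
  by (simp add: edge_potential_def algebra_simps)

lemma seq_ot_dual_directional_derivative:
  assumes "M \<ge> 1" "eps > 0"
  shows "((\<lambda>t. seq_ot_dual M m C eps a b (\<lambda>i j. f i j + t * h i j)) has_real_derivative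
     - (\<Sum>i=1..Suc M. \<Sum>j<m i. h i j * marginal_residual M m a b (dual_to_primal M C eps f) i j)) (at 0)"
proof -
  define P where "P = dual_to_primal M C eps f"
  have "((\<lambda>t. seq_ot_dual M m C eps a b (\<lambda>i j. f i j + t * h i j)) has_real_derivative
      (\<Sum>j<m 1. h 1 j * a j) + (\<Sum>k<m (Suc M). h (Suc M) k * b k)
      - (\<Sum>i=1..M. \<Sum>j<m i. \<Sum>k<m (Suc i). P i j k * edge_potential M h i j k)) (at 0)"
    unfolding seq_ot_dual_eq[OF \<open>M \<ge> 1\<close>] edge_potential_add_scaled P_def dual_to_primal_eq_exp
    by (intro derivative_eq_intros) (use \<open>eps > 0\<close> in \<open>auto simp: sum_distrib_left algebra_simps\<close>)
  moreover have "(\<Sum>i=1..M. \<Sum>j<m i. \<Sum>k<m (Suc i). P i j k * edge_potential M h i j k)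
      = (\<Sum>j<m 1. h 1 j * a j) + (\<Sum>k<m (Suc M). h (Suc M) k * b k)
        + (\<Sum>i=1..Suc M. \<Sum>j<m i. h i j * marginal_residual M m a b P i j)"
    by (rule sum_edge_potential_eq_residual[OF \<open>M \<ge> 1\<close>])
  ultimately show ?thesis
    unfolding P_def by simp
qed

lemma seq_ot_dual_optimal_imp_residual_zero:
  assumes "M \<ge> 1" "eps > 0" and opt: "seq_ot_dual_optimal M m C eps a b f"
  shows "\<forall>i\<in>{1..Suc M}. \<forall>j<m i. marginal_residual M m a b (dual_to_primal M C eps f) i j = 0"
proof -
  define r where "r = marginal_residual M m a b (dual_to_primal M C eps f)"
  have deriv: "((\<lambda>t. seq_ot_dual M m C eps a b (\<lambda>i j. f i j + t * r i j)) has_real_derivative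
      - (\<Sum>i=1..Suc M. \<Sum>j<m i. r i j * r i j)) (at 0)"
    unfolding r_def by (rule seq_ot_dual_directional_derivative[OF assms(1,2)])
  have "seq_ot_dual M m C eps a b (\<lambda>i j. f i j + t * r i j) \<le>
      seq_ot_dual M m C eps a b (\<lambda>i j. f i j + 0 * r i j)" for t
    using opt by (simp add: seq_ot_dual_optimal_def)
  then have "- (\<Sum>i=1..Suc M. \<Sum>j<m i. r i j * r i j) = 0"
    by (intro DERIV_local_max[OF deriv, of 1]) auto
  then have "(\<Sum>i=1..Suc M. \<Sum>j<m i. r i j * r i j) = 0" by simp
  then show ?thesis
    unfolding r_def[symmetric] by (simp add: sum_nonneg_eq_0_iff sum_nonneg del: sum.cl_ivl_Suc)
qed

theorem mainTheorem3:
  fixes M :: nat and m :: "nat \<Rightarrow> nat" and C :: "nat \<Rightarrow> nat \<Rightarrow> nat \<Rightarrow> real"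
    and a b :: "nat \<Rightarrow> real" and eps :: real and f :: "nat \<Rightarrow> nat \<Rightarrow> real"
  assumes M2: "M \<ge> 2"
    and m_pos: "\<forall>i\<in>{1..Suc M}. m i > 0"
    and C_nonneg: "\<forall>i\<in>{1..M}. \<forall>j<m i. \<forall>k<m (Suc i). C i j k \<ge> 0"
    and a_prob: "(\<forall>j<m 1. a j \<ge> 0) \<and> (\<Sum>j<m 1. a j) = 1"
    and b_prob: "(\<forall>k<m (Suc M). b k \<ge> 0) \<and> (\<Sum>k<m (Suc M). b k) = 1"
    and eps_pos: "eps > 0"
    and f_opt: "seq_ot_dual_optimal M m C eps a b f"
  shows "seq_ot_optimal M m C eps a b (dual_to_primal M C eps f)"
proof -
  have M1: "M \<ge> 1" using M2 by simp
  define P where "P = dual_to_primal M C eps f"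
  have residual_P: "\<forall>i\<in>{1..Suc M}. \<forall>j<m i. marginal_residual M m a b P i j = 0"
    unfolding P_def by (rule seq_ot_dual_optimal_imp_residual_zero[OF M1 eps_pos f_opt])
  have "\<forall>i\<in>{1..M}. \<forall>j<m i. \<forall>k<m (Suc i). P i j k \<ge> 0"
    by (simp add: P_def dual_to_primal_eq_exp)
  with residual_P have feasible_P: "seq_ot_feasible M m a b P"
    by (simp add: seq_ot_feasible_iff_residual[OF M1])
  have "seq_ot_objective M m C eps P = seq_ot_lagrangian M m C eps a b P f"
    using residual_P by (simp add: seq_ot_lagrangian_def)
  also have "\<dots> = seq_ot_dual M m C eps a b f"
    unfolding P_def by (rule seq_ot_lagrangian_dual_to_primal[OF M1 eps_pos])
  finally have "seq_ot_objective M m C eps P \<le> seq_ot_objective M m C eps Q"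
    if "seq_ot_feasible M m a b Q" for Q
    using seq_ot_weak_duality[OF M1 eps_pos that] by simp
  with feasible_P show ?thesis
    unfolding seq_ot_optimal_def P_def by blast
qed

end
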